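(* Let $\bar{\mathcal{L}}$ be the Laplacian of an undirected connected graph on $n$ nodes, and for $i=1,\dots,n$ let $f_i:\mathbb{R}^m\to\mathbb{R}$ be convex with Hessian $H_i$ at a point $x^*$, such that $\sum_{i=1}^nH_i$ is positive definite. Then the matrix $F=-\begin{pmatrix}\bar{\mathcal{L}}\otimes\mathbf{I}_m+\mathcal{H}&\mathcal{V}_1\mathcal{S}\otimes\mathbf{I}_m\\-\mathcal{S}\mathcal{V}_1^T\otimes\mathbf{I}_m&0\end{pmatrix}$ is Hurwitz (all eigenvalues have negative real part).
   Context: $\mathcal{H}=\mathrm{diag}\{H_1,\dots,H_n\}$ (block diagonal). $\mathcal{V}=(\mathcal{V}_1\ \mathcal{V}_2)$ is an orthogonal $n\times n$ matrix with $\mathcal{V}_2=\mathbf{1}/\sqrt n$ and the columns of $\mathcal{V}_1\in\mathbb{R}^{n\times(n-1)}$ eigenvectors of $\bar{\mathcal{L}}$ corresponding to its positive eigenvalues $\kappa_2,\dots,\kappa_n$, so that $\mathcal{V}^T\bar{\mathcal{L}}\mathcal{V}=\mathrm{diag}(\mathcal{S},0)$ with $\mathcal{S}=\mathrm{diag}(\kappa_2,\dots,\kappa_n)$. *)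

theory Defs
  imports "HOL-Analysis.Analysis" "Jordan_Normal_Form.Matrix" "Jordan_Normal_Form.Char_Poly"
begin

definition kron :: "'a::times mat \<Rightarrow> 'a mat \<Rightarrow> 'a mat" where
  "kron A B = mat (dim_row A * dim_row B) (dim_col A * dim_col B)
     (\<lambda>(i,j). A $$ (i div dim_row B, j div dim_col B) * B $$ (i mod dim_row B, j mod dim_col B))"

definition undirected_graph :: "nat \<Rightarrow> (nat \<Rightarrow> nat \<Rightarrow> bool) \<Rightarrow> bool" where
  "undirected_graph n E \<longleftrightarrow> (\<forall>i<n. \<forall>j<n. E i j \<longleftrightarrow> E j i) \<and> (\<forall>i<n. \<not> E i i)"

definition graph_connected :: "nat \<Rightarrow> (nat \<Rightarrow> nat \<Rightarrow> bool) \<Rightarrow> bool" where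
  "graph_connected n E \<longleftrightarrow>
     (\<forall>i<n. \<forall>j<n. (i, j) \<in> {(a, b). a < n \<and> b < n \<and> E a b}\<^sup>*)"

definition laplacian :: "nat \<Rightarrow> (nat \<Rightarrow> nat \<Rightarrow> bool) \<Rightarrow> real mat" where
  "laplacian n E = mat n n (\<lambda>(i,j).
     if i = j then real (card {k. k < n \<and> E i k}) else if E i j then -1 else 0)"

definition has_hessian_at :: "(real^'m \<Rightarrow> real) \<Rightarrow> real^'m^'m \<Rightarrow> real^'m \<Rightarrow> bool" where
  "has_hessian_at f H x \<longleftrightarrow> (\<exists>g. (\<forall>\<^sub>F y in nhds x. (f has_derivative (\<lambda>h. g y \<bullet> h)) (at y))
       \<and> (g has_derivative (\<lambda>h. H *v h)) (at x))"

definition pos_def_hma :: "real^'m^'m \<Rightarrow> bool" where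
  "pos_def_hma A \<longleftrightarrow> (\<forall>v. v \<noteq> 0 \<longrightarrow> v \<bullet> (A *v v) > 0)"

definition coord_enum :: "nat \<Rightarrow> 'm::finite" where
  "coord_enum = (SOME g. bij_betw g {0..<CARD('m)} (UNIV :: 'm set))"

definition to_mat :: "real^'m::finite^'m \<Rightarrow> real mat" where
  "to_mat A = mat CARD('m) CARD('m) (\<lambda>(i,j). A $ coord_enum i $ coord_enum j)"

(* block diagonal diag{H_1,...,H_n} (H indexed from 0) *)
definition block_diag :: "nat \<Rightarrow> (nat \<Rightarrow> real^'m::finite^'m) \<Rightarrow> real mat" where
  "block_diag n H = mat (n * CARD('m)) (n * CARD('m)) (\<lambda>(i,j).
     if i div CARD('m) = j div CARD('m)
     then to_mat (H (i div CARD('m))) $$ (i mod CARD('m), j mod CARD('m)) else 0)"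

definition hurwitz :: "real mat \<Rightarrow> bool" where
  "hurwitz A \<longleftrightarrow> (\<forall>k. eigenvalue (map_mat complex_of_real A) k \<longrightarrow> Re k < 0)"

end

theory Submission
  imports Defs
begin

text \<open>
  Write the matrix as \<open>-F\<close> with \<open>F = [[A, B], [-B\<^sup>T, 0]]\<close>, \<open>A = L \<otimes> I + diag{H\<^sub>i}\<close> and
  \<open>B = V\<^sub>1 S \<otimes> I\<close>. Because the off-diagonal blocks are skew, \<open>z\<^sup>T F z\<close> only sees the upper
  half \<open>z\<^sub>1\<close> of \<open>z\<close> and equals \<open>z\<^sub>1\<^sup>T A z\<^sub>1 \<ge> 0\<close>. If \<open>-F v = \<lambda> v\<close> with \<open>v = a + i b\<close>,
  then \<open>a\<^sup>T F a + b\<^sup>T F b = -Re \<lambda> (|a|\<^sup>2 + |b|\<^sup>2)\<close>, so \<open>Re \<lambda> \<ge> 0\<close> forces the upper halves of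
  \<open>a\<close> and \<open>b\<close> into the null set of the form of \<open>A\<close>. On a connected graph the Laplacian part
  makes such a vector of the form \<open>1 \<otimes> c\<close>, and then \<open>c\<^sup>T (\<Sum> H\<^sub>i) c = 0\<close> gives \<open>c = 0\<close>.
  The first block row of the eigenvalue equation then says \<open>B z\<^sub>2 = 0\<close>, and \<open>B\<close> has trivial
  kernel since \<open>V\<^sub>1\<close> has orthonormal columns and every \<open>\<kappa>\<^sub>i > 0\<close>; hence \<open>v = 0\<close>.
\<close>

section \<open>Kronecker products with the identity\<close>

lemma mult_add_less_mult_nat: "p < r \<Longrightarrow> d < m \<Longrightarrow> p * m + d < r * (m :: nat)"
  by (metis add_less_cancel_left le_less_trans mult_Suc mult_le_mono1 not_less_eq_eq add.commute
      less_eq_Suc_le)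

lemma sum_lessThan_mult_nat:
  fixes n m :: nat
  shows "(\<Sum>i<n * m. f i) = (\<Sum>p<n. \<Sum>c<m. f (p * m + c))"
proof -
  have "(\<Sum>c<m. f (p * m + c)) = sum f {p * m..<p * m + m}" for p
    using sum.shift_bounds_nat_ivl[of f 0 "p * m" m] by (simp add: atLeast0LessThan add.commute)
  then show ?thesis
    by (simp add: sum.nat_group)
qed

lemma vec_eq_0_if_blocks_eq_0:
  assumes x: "x \<in> carrier_vec (n * m)" and blocks: "\<And>p. p < n \<Longrightarrow> vec m (\<lambda>c. x $ (p * m + c)) = 0\<^sub>v m"
  shows "x = 0\<^sub>v (n * m)"
proof (rule eq_vecI)
  fix j assume "j < dim_vec (0\<^sub>v (n * m) :: 'a vec)"
  then have j: "j < n * m" by simp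
  then have "0 < m"
    by (auto intro: Nat.gr0I)
  with j have "j div m < n" "j mod m < m"
    by (simp_all add: less_mult_imp_div_less)
  then have "x $ (j div m * m + j mod m) = 0"
    using arg_cong[OF blocks[of "j div m"], of "\<lambda>v. v $ (j mod m)"] by simp
  then show "x $ j = 0\<^sub>v (n * m) $ j"
    using j by simp
qed (use x in simp)

lemma scalar_prod_as_sum: "dim_vec w = n \<Longrightarrow> v \<bullet> w = (\<Sum>i<n. v $ i * w $ i)"
  by (simp add: scalar_prod_def atLeast0LessThan)

lemma index_kron_one_mat:
  fixes X :: "'a::{times,zero,one} mat"
  assumes X: "X \<in> carrier_mat r c" and "p < r" "q < c" "d < m" "e < m"
  shows "kron X (1\<^sub>m m) $$ (p * m + d, q * m + e) = X $$ (p, q) * (if d = e then 1 else 0)"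
  using assms mult_add_less_mult_nat[of p r d m] mult_add_less_mult_nat[of q c e m]
  by (simp add: kron_def)

lemma kron_carrier_mat: "kron X Y \<in> carrier_mat (dim_row X * dim_row Y) (dim_col X * dim_col Y)"
  by (simp add: kron_def)

lemma kron_one_mat_mult_vec_index:
  fixes X :: "'a::comm_ring_1 mat"
  assumes X: "X \<in> carrier_mat r c" and y: "y \<in> carrier_vec (c * m)" and p: "p < r" and d: "d < m"
  shows "(kron X (1\<^sub>m m) *\<^sub>v y) $ (p * m + d) = (X *\<^sub>v vec c (\<lambda>q. y $ (q * m + d))) $ p"
proof -
  have "(kron X (1\<^sub>m m) *\<^sub>v y) $ (p * m + d)
      = (\<Sum>q<c. \<Sum>e<m. kron X (1\<^sub>m m) $$ (p * m + d, q * m + e) * y $ (q * m + e))"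
  proof -
    have "(kron X (1\<^sub>m m) *\<^sub>v y) $ (p * m + d) = (\<Sum>j<c * m. kron X (1\<^sub>m m) $$ (p * m + d, j) * y $ j)"
      using X y p d mult_add_less_mult_nat[of p r d m] kron_carrier_mat[of X "1\<^sub>m m"]
      by (auto simp: scalar_prod_as_sum intro!: sum.cong)
    then show ?thesis
      by (simp only: sum_lessThan_mult_nat)
  qed
  also have "\<dots> = (\<Sum>q<c. X $$ (p, q) * y $ (q * m + d))"
  proof (intro sum.cong refl)
    fix q assume "q \<in> {..<c}"
    then have "kron X (1\<^sub>m m) $$ (p * m + d, q * m + e) * y $ (q * m + e)
        = (if e = d then X $$ (p, q) * y $ (q * m + d) else 0)" if "e < m" for e
      using X p d that by (auto simp: index_kron_one_mat)
    then show "(\<Sum>e<m. kron X (1\<^sub>m m) $$ (p * m + d, q * m + e) * y $ (q * m + e))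
        = X $$ (p, q) * y $ (q * m + d)"
      using d by (simp add: sum.delta)
  qed
  also have "\<dots> = (X *\<^sub>v vec c (\<lambda>q. y $ (q * m + d))) $ p"
    using X p by (simp add: scalar_prod_as_sum)
  finally show ?thesis .
qed

lemma transpose_kron: "transpose_mat (kron X Y) = kron (transpose_mat X) (transpose_mat Y)"
proof (rule eq_matI)
  fix i j assume "i < dim_row (kron (transpose_mat X) (transpose_mat Y))"
    and "j < dim_col (kron (transpose_mat X) (transpose_mat Y))"
  then have i: "i < dim_col X * dim_col Y" and j: "j < dim_row X * dim_row Y"
    by (simp_all add: kron_def)
  then have "0 < dim_col Y" "0 < dim_row Y"
    by (auto intro: gr0I)
  with i j show "transpose_mat (kron X Y) $$ (i, j) = kron (transpose_mat X) (transpose_mat Y) $$ (i, j)"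
    by (simp add: kron_def less_mult_imp_div_less)
qed (simp_all add: kron_def)

lemma transpose_diag_mat:
  "transpose_mat (mat k k (\<lambda>(i, j). if i = j then d i else 0)) = mat k k (\<lambda>(i, j). if i = j then d i else 0)"
  by (intro eq_matI) auto

lemma kron_one_mat_trivial_kernel:
  fixes X :: "'a::comm_ring_1 mat"
  assumes X: "X \<in> carrier_mat r c"
    and ker: "\<And>z. z \<in> carrier_vec c \<Longrightarrow> X *\<^sub>v z = 0\<^sub>v r \<Longrightarrow> z = 0\<^sub>v c"
    and y: "y \<in> carrier_vec (c * m)" and Ky: "kron X (1\<^sub>m m) *\<^sub>v y = 0\<^sub>v (r * m)"
  shows "y = 0\<^sub>v (c * m)"
proof (rule eq_vecI)
  have slice: "vec c (\<lambda>q. y $ (q * m + d)) = 0\<^sub>v c" if d: "d < m" for d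
  proof (rule ker)
    show "X *\<^sub>v vec c (\<lambda>q. y $ (q * m + d)) = 0\<^sub>v r"
    proof (rule eq_vecI)
      fix p assume "p < dim_vec (0\<^sub>v r :: 'a vec)"
      then have p: "p < r" by simp
      then show "(X *\<^sub>v vec c (\<lambda>q. y $ (q * m + d))) $ p = 0\<^sub>v r $ p"
        using kron_one_mat_mult_vec_index[OF X y p d] Ky mult_add_less_mult_nat[OF p d] by simp
    qed (use X in simp)
  qed simp
  fix j assume "j < dim_vec (0\<^sub>v (c * m) :: 'a vec)"
  then have j: "j < c * m" by simp
  then have "m > 0" and "j div m < c"
    by (auto simp: less_mult_imp_div_less intro: Nat.gr0I)
  then have "y $ (j div m * m + j mod m) = 0"
    using arg_cong[OF slice[of "j mod m"], of "\<lambda>v. v $ (j div m)"] by simp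
  then show "y $ j = 0\<^sub>v (c * m) $ j"
    using j by simp
qed (use y in simp)

lemma left_invertible_trivial_kernel:
  fixes X :: "'a::comm_ring_1 mat"
  assumes "Y \<in> carrier_mat c r" "X \<in> carrier_mat r c" "Y * X = 1\<^sub>m c"
    and "y \<in> carrier_vec c" "X *\<^sub>v y = 0\<^sub>v r"
  shows "y = 0\<^sub>v c"
proof -
  have "y = (Y * X) *\<^sub>v y"
    using assms by simp
  also have "\<dots> = Y *\<^sub>v (X *\<^sub>v y)"
    using assms by (metis assoc_mult_mat_vec)
  also have "\<dots> = 0\<^sub>v c"
    using assms by (intro eq_vecI) auto
  finally show ?thesis .
qed

lemma mult_mat_trivial_kernel:
  fixes X :: "'a::comm_ring_1 mat"
  assumes X: "X \<in> carrier_mat r s" and Z: "Z \<in> carrier_mat s c"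
    and kerX: "\<And>z. z \<in> carrier_vec s \<Longrightarrow> X *\<^sub>v z = 0\<^sub>v r \<Longrightarrow> z = 0\<^sub>v s"
    and kerZ: "\<And>z. z \<in> carrier_vec c \<Longrightarrow> Z *\<^sub>v z = 0\<^sub>v s \<Longrightarrow> z = 0\<^sub>v c"
    and y: "y \<in> carrier_vec c" and XZy: "(X * Z) *\<^sub>v y = 0\<^sub>v r"
  shows "y = 0\<^sub>v c"
  using X Z y XZy by (intro kerZ kerX) auto

lemma diag_mat_trivial_kernel:
  fixes \<kappa> :: "nat \<Rightarrow> 'a::idom"
  assumes \<kappa>: "\<And>i. i < k \<Longrightarrow> \<kappa> i \<noteq> 0"
    and y: "y \<in> carrier_vec k" and Dy: "mat k k (\<lambda>(i, j). if i = j then \<kappa> i else 0) *\<^sub>v y = 0\<^sub>v k"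
  shows "y = 0\<^sub>v k"
proof (rule eq_vecI)
  fix i assume "i < dim_vec (0\<^sub>v k :: 'a vec)"
  then have i: "i < k" by simp
  have "\<kappa> i * y $ i = (mat k k (\<lambda>(i, j). if i = j then \<kappa> i else 0) *\<^sub>v y) $ i"
    using i y by (simp add: scalar_prod_as_sum if_distrib[of "\<lambda>t. t * _"] sum.delta cong: if_cong)
  then show "y $ i = 0\<^sub>v k $ i"
    using Dy i \<kappa>[OF i] by simp
qed (use y in simp)

section \<open>Saddle-point matrices\<close>

lemma Re_Im_of_real_mat_mult_vec:
  fixes M :: "real mat"
  assumes "i < dim_row M" "dim_vec v = dim_col M"
  shows "Re ((map_mat complex_of_real M *\<^sub>v v) $ i) = (M *\<^sub>v map_vec Re v) $ i"
    and "Im ((map_mat complex_of_real M *\<^sub>v v) $ i) = (M *\<^sub>v map_vec Im v) $ i"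
  using assms by (simp_all add: scalar_prod_def Re_sum Im_sum)

lemma complex_vec_eq_0_if_Re_Im_eq_0:
  assumes v: "v \<in> carrier_vec n" and "map_vec Re v = 0\<^sub>v n" "map_vec Im v = 0\<^sub>v n"
  shows "v = 0\<^sub>v n"
proof (rule eq_vecI)
  fix i assume i: "i < dim_vec (0\<^sub>v n :: complex vec)"
  then have "Re (v $ i) = 0" "Im (v $ i) = 0"
    using assms by (metis carrier_vecD index_map_vec(1) index_zero_vec(1) index_zero_vec(2))+
  then show "v $ i = 0\<^sub>v n $ i"
    using i by (simp add: complex_eq_iff)
qed (use v in simp)

lemma eigenvector_of_real_mat_Re_Im:
  fixes M :: "real mat"
  assumes M: "M \<in> carrier_mat T T" and ev: "eigenvector (map_mat complex_of_real M) v k"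
  shows "M *\<^sub>v map_vec Re v = Re k \<cdot>\<^sub>v map_vec Re v - Im k \<cdot>\<^sub>v map_vec Im v"
    and "M *\<^sub>v map_vec Im v = Re k \<cdot>\<^sub>v map_vec Im v + Im k \<cdot>\<^sub>v map_vec Re v"
proof -
  have v: "v \<in> carrier_vec T" and eq: "map_mat complex_of_real M *\<^sub>v v = k \<cdot>\<^sub>v v"
    using ev M unfolding eigenvector_def by auto
  have "(M *\<^sub>v map_vec Re v) $ i = Re k * Re (v $ i) - Im k * Im (v $ i)"
    and "(M *\<^sub>v map_vec Im v) $ i = Re k * Im (v $ i) + Im k * Re (v $ i)"
    if "i < T" for i
  proof -
    have "(M *\<^sub>v map_vec Re v) $ i = Re ((map_mat complex_of_real M *\<^sub>v v) $ i)"
      and "(M *\<^sub>v map_vec Im v) $ i = Im ((map_mat complex_of_real M *\<^sub>v v) $ i)"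
      using that v M by (simp_all only: Re_Im_of_real_mat_mult_vec carrier_matD carrier_vecD)
    then show "(M *\<^sub>v map_vec Re v) $ i = Re k * Re (v $ i) - Im k * Im (v $ i)"
      and "(M *\<^sub>v map_vec Im v) $ i = Re k * Im (v $ i) + Im k * Re (v $ i)"
      using that v by (simp_all add: eq)
  qed
  then show "M *\<^sub>v map_vec Re v = Re k \<cdot>\<^sub>v map_vec Re v - Im k \<cdot>\<^sub>v map_vec Im v"
    and "M *\<^sub>v map_vec Im v = Re k \<cdot>\<^sub>v map_vec Im v + Im k \<cdot>\<^sub>v map_vec Re v"
    using M v by (auto intro!: eq_vecI)
qed

lemma four_block_skew_mult_vec:
  fixes A B :: "'a::comm_ring_1 mat"
  assumes A: "A \<in> carrier_mat N N" and B: "B \<in> carrier_mat N K" and z: "z \<in> carrier_vec (N + K)"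
  shows "four_block_mat A B (- transpose_mat B) (0\<^sub>m K K) *\<^sub>v z
       = (A *\<^sub>v vec_first z N + B *\<^sub>v vec_last z K) @\<^sub>v (- (transpose_mat B *\<^sub>v vec_first z N))"
proof -
  have "four_block_mat A B (- transpose_mat B) (0\<^sub>m K K) *\<^sub>v (vec_first z N @\<^sub>v vec_last z K)
      = (A *\<^sub>v vec_first z N + B *\<^sub>v vec_last z K)
        @\<^sub>v (- transpose_mat B *\<^sub>v vec_first z N + 0\<^sub>m K K *\<^sub>v vec_last z K)"
    using A B by (intro four_block_mat_mult_vec) auto
  moreover have "0\<^sub>m K K *\<^sub>v vec_last z K = 0\<^sub>v K"
    by auto
  ultimately show ?thesis
    using z B by simp
qed

lemma four_block_skew_quad_form:
  fixes A B :: "'a::comm_ring_1 mat"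
  assumes A: "A \<in> carrier_mat N N" and B: "B \<in> carrier_mat N K" and z: "z \<in> carrier_vec (N + K)"
  shows "z \<bullet> (four_block_mat A B (- transpose_mat B) (0\<^sub>m K K) *\<^sub>v z)
       = vec_first z N \<bullet> (A *\<^sub>v vec_first z N)"
proof -
  define x where "x = vec_first z N"
  define y where "y = vec_last z K"
  have x: "x \<in> carrier_vec N" and y: "y \<in> carrier_vec K" and zxy: "z = x @\<^sub>v y"
    using z by (auto simp: x_def y_def)
  have "z \<bullet> (four_block_mat A B (- transpose_mat B) (0\<^sub>m K K) *\<^sub>v z)
      = x \<bullet> (A *\<^sub>v x + B *\<^sub>v y) + y \<bullet> (- (transpose_mat B *\<^sub>v x))"
    unfolding four_block_skew_mult_vec[OF A B z] x_def[symmetric] y_def[symmetric]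
    using A B x y by (subst zxy, intro scalar_prod_append) auto
  also have "y \<bullet> (- (transpose_mat B *\<^sub>v x)) = - (x \<bullet> (B *\<^sub>v y))"
    using transpose_vec_mult_scalar[OF B y x] comm_scalar_prod[of y K "transpose_mat B *\<^sub>v x"] A B x y
    by simp
  moreover have "x \<bullet> (A *\<^sub>v x + B *\<^sub>v y) = x \<bullet> (A *\<^sub>v x) + x \<bullet> (B *\<^sub>v y)"
    using A B x y by (intro scalar_prod_add_distrib) auto
  ultimately show ?thesis
    by (simp add: x_def)
qed

lemma scalar_prod_self_nonneg: "0 \<le> (x :: real vec) \<bullet> x"
  unfolding scalar_prod_def by (intro sum_nonneg) simp

lemma eigenvector_of_real_mat_quad_form:
  fixes M :: "real mat"
  assumes M: "M \<in> carrier_mat T T" and ev: "eigenvector (map_mat complex_of_real M) v k"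
  shows "map_vec Re v \<bullet> (M *\<^sub>v map_vec Re v) + map_vec Im v \<bullet> (M *\<^sub>v map_vec Im v)
       = Re k * (map_vec Re v \<bullet> map_vec Re v + map_vec Im v \<bullet> map_vec Im v)"
proof -
  have "v \<in> carrier_vec T"
    using ev M unfolding eigenvector_def by auto
  then have a: "map_vec Re v \<in> carrier_vec T" and b: "map_vec Im v \<in> carrier_vec T"
    by auto
  then show ?thesis
    unfolding eigenvector_of_real_mat_Re_Im[OF M ev]
    by (simp add: scalar_prod_minus_distrib[of _ T] scalar_prod_add_distrib[of _ T]
        comm_scalar_prod[of "map_vec Re v" T "map_vec Im v"] algebra_simps)
qed

lemma saddle_point_mat_kernel:
  fixes A B :: "'a::comm_ring_1 mat"
  assumes A: "A \<in> carrier_mat N N" and B: "B \<in> carrier_mat N K"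
    and ker: "\<And>y. y \<in> carrier_vec K \<Longrightarrow> B *\<^sub>v y = 0\<^sub>v N \<Longrightarrow> y = 0\<^sub>v K"
    and z: "z \<in> carrier_vec (N + K)" and z1: "vec_first z N = 0\<^sub>v N"
    and Fz: "\<And>i. i < N \<Longrightarrow> (four_block_mat A B (- transpose_mat B) (0\<^sub>m K K) *\<^sub>v z) $ i = 0"
  shows "z = 0\<^sub>v (N + K)"
proof -
  have "B *\<^sub>v vec_last z K = 0\<^sub>v N"
  proof (rule eq_vecI)
    fix i assume "i < dim_vec (0\<^sub>v N :: 'a vec)"
    then have "i < N" by simp
    then show "(B *\<^sub>v vec_last z K) $ i = 0\<^sub>v N $ i"
      using Fz[of i] A B unfolding four_block_skew_mult_vec[OF A B z] z1 by simp
  qed (use B in simp)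
  then have "vec_last z K = 0\<^sub>v K"
    by (intro ker) simp
  moreover have "0\<^sub>v N @\<^sub>v 0\<^sub>v K = (0\<^sub>v (N + K) :: 'a vec)"
    by (intro eq_vecI) auto
  ultimately show ?thesis
    using vec_first_last_append[OF z] z1 by simp
qed

lemma hurwitz_neg_saddle_point_mat:
  fixes A B :: "real mat"
  assumes A: "A \<in> carrier_mat N N" and B: "B \<in> carrier_mat N K"
    and psd: "\<And>x. x \<in> carrier_vec N \<Longrightarrow> 0 \<le> x \<bullet> (A *\<^sub>v x)"
    and definite: "\<And>x. x \<in> carrier_vec N \<Longrightarrow> x \<bullet> (A *\<^sub>v x) = 0 \<Longrightarrow> x = 0\<^sub>v N"
    and ker: "\<And>y. y \<in> carrier_vec K \<Longrightarrow> B *\<^sub>v y = 0\<^sub>v N \<Longrightarrow> y = 0\<^sub>v K"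
  shows "hurwitz (- four_block_mat A B (- transpose_mat B) (0\<^sub>m K K))"
  unfolding hurwitz_def
proof (intro allI impI)
  define F where "F = four_block_mat A B (- transpose_mat B) (0\<^sub>m K K)"
  have F: "F \<in> carrier_mat (N + K) (N + K)" and negF_carrier: "- F \<in> carrier_mat (N + K) (N + K)"
    using A B by (simp_all add: F_def)
  have negF: "- F *\<^sub>v z = - (F *\<^sub>v z)" "z \<bullet> (- F *\<^sub>v z) = - (z \<bullet> (F *\<^sub>v z))"
    if "z \<in> carrier_vec (N + K)" for z
    using that F by (simp_all add: scalar_prod_uminus_right)
  fix k assume "eigenvalue (map_mat complex_of_real (- F)) k"
  then obtain v where ev: "eigenvector (map_mat complex_of_real (- F)) v k"
    unfolding eigenvalue_def by blast
  then have v: "v \<in> carrier_vec (N + K)" and v0: "v \<noteq> 0\<^sub>v (N + K)"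
    using F unfolding eigenvector_def by auto
  define a where "a = map_vec Re v"
  define b where "b = map_vec Im v"
  have a: "a \<in> carrier_vec (N + K)" and b: "b \<in> carrier_vec (N + K)"
    using v by (auto simp: a_def b_def)
  show "Re k < 0"
  proof (rule ccontr)
    assume "\<not> Re k < 0"
    have "- (vec_first a N \<bullet> (A *\<^sub>v vec_first a N)) - vec_first b N \<bullet> (A *\<^sub>v vec_first b N)
        = Re k * (a \<bullet> a + b \<bullet> b)"
      using eigenvector_of_real_mat_quad_form[OF negF_carrier ev] negF(2)[OF a] negF(2)[OF b]
        four_block_skew_quad_form[OF A B a] four_block_skew_quad_form[OF A B b]
      by (simp add: F_def a_def b_def)
    moreover have "0 \<le> Re k * (a \<bullet> a + b \<bullet> b)"
      using \<open>\<not> Re k < 0\<close> by (simp add: scalar_prod_self_nonneg)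
    ultimately have "vec_first a N \<bullet> (A *\<^sub>v vec_first a N) + vec_first b N \<bullet> (A *\<^sub>v vec_first b N) \<le> 0"
      by linarith
    with psd[of "vec_first a N"] psd[of "vec_first b N"]
    have a1: "vec_first a N = 0\<^sub>v N" and b1: "vec_first b N = 0\<^sub>v N"
      by (auto intro!: definite)
    then have "a $ i = 0" and "b $ i = 0" if "i < N" for i
      using that by (metis index_zero_vec(1) vec_first_def index_vec)+
    moreover have "F *\<^sub>v a = - (Re k \<cdot>\<^sub>v a - Im k \<cdot>\<^sub>v b)" and "F *\<^sub>v b = - (Re k \<cdot>\<^sub>v b + Im k \<cdot>\<^sub>v a)"
      using eigenvector_of_real_mat_Re_Im[OF negF_carrier ev] negF(1)[OF a] negF(1)[OF b]
      by (simp_all add: a_def b_def)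
    ultimately have "(F *\<^sub>v a) $ i = 0" and "(F *\<^sub>v b) $ i = 0" if "i < N" for i
      using that a b by simp_all
    then have "a = 0\<^sub>v (N + K)" and "b = 0\<^sub>v (N + K)"
      using saddle_point_mat_kernel[OF A B ker] a b a1 b1 unfolding F_def by blast+
    with v v0 show False
      unfolding a_def b_def by (metis complex_vec_eq_0_if_Re_Im_eq_0)
  qed
qed

section \<open>The quadratic form of \<open>L \<otimes> I + diag{H\<^sub>i}\<close>\<close>

lemma kron_one_mat_quad_form:
  fixes X :: "'a::comm_ring_1 mat"
  assumes X: "X \<in> carrier_mat n n" and x: "x \<in> carrier_vec (n * m)"
  shows "x \<bullet> (kron X (1\<^sub>m m) *\<^sub>v x)
       = (\<Sum>d<m. vec n (\<lambda>p. x $ (p * m + d)) \<bullet> (X *\<^sub>v vec n (\<lambda>p. x $ (p * m + d))))"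
proof -
  have "x \<bullet> (kron X (1\<^sub>m m) *\<^sub>v x) = (\<Sum>p<n. \<Sum>d<m. x $ (p * m + d) * (kron X (1\<^sub>m m) *\<^sub>v x) $ (p * m + d))"
    using X kron_carrier_mat[of X "1\<^sub>m m"]
    by (subst scalar_prod_as_sum[of _ "n * m"]) (simp_all add: sum_lessThan_mult_nat del: index_mult_mat_vec)
  also have "\<dots> = (\<Sum>p<n. \<Sum>d<m. x $ (p * m + d) * (X *\<^sub>v vec n (\<lambda>q. x $ (q * m + d))) $ p)"
    using X x by (simp add: kron_one_mat_mult_vec_index)
  also have "\<dots> = (\<Sum>d<m. vec n (\<lambda>p. x $ (p * m + d)) \<bullet> (X *\<^sub>v vec n (\<lambda>p. x $ (p * m + d))))"
    using X by (subst sum.swap) (simp add: scalar_prod_as_sum)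
  finally show ?thesis .
qed

lemma block_diag_carrier_mat: "block_diag n H \<in> carrier_mat (n * CARD('m)) (n * CARD('m))"
  for H :: "nat \<Rightarrow> real^'m::finite^'m"
  by (simp add: block_diag_def)

lemma dim_to_mat [simp]: "dim_row (to_mat A) = CARD('m)" "dim_col (to_mat A) = CARD('m)"
  for A :: "real^'m::finite^'m"
  by (simp_all add: to_mat_def)

lemma block_diag_mult_vec_index:
  fixes H :: "nat \<Rightarrow> real^'m::finite^'m"
  assumes x: "x \<in> carrier_vec (n * CARD('m))" and p: "p < n" and c: "c < CARD('m)"
  shows "(block_diag n H *\<^sub>v x) $ (p * CARD('m) + c)
       = (to_mat (H p) *\<^sub>v vec CARD('m) (\<lambda>e. x $ (p * CARD('m) + e))) $ c"
proof -
  let ?m = "CARD('m)"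
  have "(block_diag n H *\<^sub>v x) $ (p * ?m + c) = (\<Sum>j<n * ?m. block_diag n H $$ (p * ?m + c, j) * x $ j)"
    using x p c mult_add_less_mult_nat[OF p c] block_diag_carrier_mat[of n H]
    by (auto simp: scalar_prod_as_sum intro!: sum.cong)
  also have "\<dots> = (\<Sum>q<n. \<Sum>e<?m. block_diag n H $$ (p * ?m + c, q * ?m + e) * x $ (q * ?m + e))"
    by (rule sum_lessThan_mult_nat)
  also have "\<dots> = (\<Sum>q<n. if q = p then (\<Sum>e<?m. to_mat (H p) $$ (c, e) * x $ (p * ?m + e)) else 0)"
    using p c mult_add_less_mult_nat[OF p c]
    by (intro sum.cong refl) (auto simp: block_diag_def mult_add_less_mult_nat)
  also have "\<dots> = (to_mat (H p) *\<^sub>v vec ?m (\<lambda>e. x $ (p * ?m + e))) $ c"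
    using p c by (simp add: scalar_prod_as_sum)
  finally show ?thesis .
qed

lemma block_diag_quad_form:
  fixes H :: "nat \<Rightarrow> real^'m::finite^'m"
  assumes x: "x \<in> carrier_vec (n * CARD('m))"
  shows "x \<bullet> (block_diag n H *\<^sub>v x)
       = (\<Sum>p<n. vec CARD('m) (\<lambda>c. x $ (p * CARD('m) + c))
                 \<bullet> (to_mat (H p) *\<^sub>v vec CARD('m) (\<lambda>c. x $ (p * CARD('m) + c))))"
proof -
  let ?m = "CARD('m)"
  have "x \<bullet> (block_diag n H *\<^sub>v x) = (\<Sum>p<n. \<Sum>c<?m. x $ (p * ?m + c) * (block_diag n H *\<^sub>v x) $ (p * ?m + c))"
    using block_diag_carrier_mat[of n H]
    by (subst scalar_prod_as_sum[of _ "n * ?m"]) (simp_all add: sum_lessThan_mult_nat del: index_mult_mat_vec)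
  also have "\<dots> = (\<Sum>p<n. vec ?m (\<lambda>c. x $ (p * ?m + c)) \<bullet> (to_mat (H p) *\<^sub>v vec ?m (\<lambda>c. x $ (p * ?m + c))))"
    using x
    by (intro sum.cong refl, subst scalar_prod_as_sum[of _ ?m]) (simp_all add: block_diag_mult_vec_index)
  finally show ?thesis .
qed

lemma coord_enum_bij: "bij_betw (coord_enum :: nat \<Rightarrow> 'm::finite) {0..<CARD('m)} UNIV"
proof -
  obtain h :: "nat \<Rightarrow> 'm" where "bij_betw h {0..<CARD('m)} UNIV"
    using ex_bij_betw_nat_finite[of "UNIV :: 'm set"] by auto
  then show ?thesis
    unfolding coord_enum_def by (rule someI[where P = "\<lambda>g. bij_betw g {0..<CARD('m)} UNIV"])
qed

lemma sum_UNIV_coord_enum: "(\<Sum>k\<in>UNIV. f k) = (\<Sum>c<CARD('m). f (coord_enum c :: 'm::finite))"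
  using sum.reindex_bij_betw[OF coord_enum_bij, of f] by (simp add: atLeast0LessThan)

definition hma_of_vec :: "real vec \<Rightarrow> real^'m::finite" where
  "hma_of_vec u = (\<chi> k. u $ inv_into {0..<CARD('m)} coord_enum k)"

lemma hma_of_vec_nth_coord_enum:
  "c < CARD('m) \<Longrightarrow> (hma_of_vec u :: real^'m::finite) $ coord_enum c = u $ c"
  using coord_enum_bij[where 'm = 'm] by (simp add: hma_of_vec_def bij_betw_def inv_into_f_f)

lemma hma_of_vec_eq_0:
  assumes u: "u \<in> carrier_vec CARD('m)" and u0: "(hma_of_vec u :: real^'m::finite) = 0"
  shows "u = 0\<^sub>v CARD('m)"
  using u hma_of_vec_nth_coord_enum[where 'm = 'm, of _ u] by (intro eq_vecI) (auto simp: u0)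

lemma scalar_prod_mult_mat_vec_as_sum:
  assumes "A \<in> carrier_mat n n" "x \<in> carrier_vec n"
  shows "x \<bullet> (A *\<^sub>v x) = (\<Sum>i<n. \<Sum>j<n. x $ i * A $$ (i, j) * x $ j)"
  using assms by (simp add: scalar_prod_as_sum sum_distrib_left mult.assoc)

lemma to_mat_quad_form:
  fixes X :: "real^'m::finite^'m"
  assumes u: "u \<in> carrier_vec CARD('m)"
  shows "u \<bullet> (to_mat X *\<^sub>v u) = hma_of_vec u \<bullet> (X *v hma_of_vec u)"
  using u
  by (simp add: scalar_prod_mult_mat_vec_as_sum[of _ "CARD('m)"] carrier_matI inner_vec_def
      matrix_vector_mult_def sum_UNIV_coord_enum hma_of_vec_nth_coord_enum to_mat_def
      sum_distrib_left mult.assoc)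

lemma laplacian_quad_form:
  fixes y :: "real vec"
  assumes g: "undirected_graph n E" and y: "y \<in> carrier_vec n"
  shows "y \<bullet> (laplacian n E *\<^sub>v y) = (\<Sum>p<n. \<Sum>q<n. if E p q then (y $ p - y $ q)^2 else 0) / 2"
proof -
  have sym: "\<And>p q. p < n \<Longrightarrow> q < n \<Longrightarrow> E p q = E q p" and irrefl: "\<And>p. p < n \<Longrightarrow> \<not> E p p"
    using g unfolding undirected_graph_def by auto
  define S where "S = (\<Sum>p<n. \<Sum>q<n. if E p q then y $ p ^ 2 - y $ p * y $ q else 0)"
  have row: "(\<Sum>q<n. y $ p * laplacian n E $$ (p, q) * y $ q)
           = (\<Sum>q<n. if E p q then y $ p ^ 2 - y $ p * y $ q else 0)" if p: "p < n" for p
  proof -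
    have "real (card {k. k < n \<and> E p k}) = (\<Sum>q<n. if E p q then 1 else 0)"
      by (simp add: sum.If_cases Int_def conj_commute)
    then have "(\<Sum>q<n. if E p q then y $ p ^ 2 - y $ p * y $ q else 0)
        = y $ p * y $ p * real (card {k. k < n \<and> E p k}) - (\<Sum>q<n. if E p q then y $ p * y $ q else 0)"
      by (simp add: sum_distrib_left power2_eq_square sum_subtractf[symmetric] if_distrib cong: if_cong)
    also have "\<dots> = (\<Sum>q<n. (if p = q then y $ p * y $ p * real (card {k. k < n \<and> E p k}) else 0)
                           - (if E p q then y $ p * y $ q else 0))"
      using p by (simp add: sum_subtractf)
    also have "\<dots> = (\<Sum>q<n. y $ p * laplacian n E $$ (p, q) * y $ q)"
      by (rule sum.cong) (auto simp: laplacian_def p irrefl)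
    finally show ?thesis ..
  qed
  have quad: "y \<bullet> (laplacian n E *\<^sub>v y) = S"
  proof -
    have "laplacian n E \<in> carrier_mat n n"
      by (simp add: laplacian_def)
    then show ?thesis
      by (simp add: scalar_prod_mult_mat_vec_as_sum[OF _ y] S_def row)
  qed
  have "S = (\<Sum>p<n. \<Sum>q<n. if E p q then y $ q ^ 2 - y $ q * y $ p else 0)"
    unfolding S_def by (subst sum.swap) (auto simp: sym intro!: sum.cong)
  then have "2 * S = (\<Sum>p<n. \<Sum>q<n. (if E p q then y $ p ^ 2 - y $ p * y $ q else 0)
                                  + (if E p q then y $ q ^ 2 - y $ q * y $ p else 0))"
    by (simp add: S_def sum.distrib)
  also have "\<dots> = (\<Sum>p<n. \<Sum>q<n. if E p q then (y $ p - y $ q)^2 else 0)"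
    by (intro sum.cong refl) (auto simp: power2_eq_square algebra_simps)
  finally show ?thesis
    using quad by simp
qed

lemma laplacian_quad_form_nonneg:
  fixes y :: "real vec"
  assumes "undirected_graph n E" "y \<in> carrier_vec n"
  shows "0 \<le> y \<bullet> (laplacian n E *\<^sub>v y)"
  unfolding laplacian_quad_form[OF assms] by (intro divide_nonneg_pos sum_nonneg) auto

lemma laplacian_quad_form_eq_0_imp_const:
  fixes y :: "real vec"
  assumes g: "undirected_graph n E" and conn: "graph_connected n E" and y: "y \<in> carrier_vec n"
    and y0: "y \<bullet> (laplacian n E *\<^sub>v y) = 0" and i: "i < n" and j: "j < n"
  shows "y $ i = y $ j"
proof -
  have "(\<Sum>p<n. \<Sum>q<n. if E p q then (y $ p - y $ q)^2 else 0) = 0"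
    using y0 unfolding laplacian_quad_form[OF g y] by simp
  then have edge: "y $ p = y $ q" if "p < n" "q < n" "E p q" for p q
    using that by (simp add: sum_nonneg_eq_0_iff sum_nonneg split: if_splits)
  have "(i, j) \<in> {(a, b). a < n \<and> b < n \<and> E a b}\<^sup>*"
    using conn i j unfolding graph_connected_def by blast
  then show ?thesis
    by (induction rule: rtrancl_induct) (auto dest: edge)
qed

lemma inner_sum_matrix_vector_mult:
  fixes H :: "nat \<Rightarrow> real^'m::finite^'m"
  shows "u \<bullet> ((\<Sum>p<n. H p) *v u) = (\<Sum>p<n. u \<bullet> (H p *v u))"
  by (induction n) (simp_all add: matrix_vector_mult_add_rdistrib inner_add_right)

lemma laplacian_block_diag_quad_form:
  fixes H :: "nat \<Rightarrow> real^'m::finite^'m" and x :: "real vec"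
  assumes x: "x \<in> carrier_vec (n * CARD('m))"
  shows "x \<bullet> ((kron (laplacian n E) (1\<^sub>m CARD('m)) + block_diag n H) *\<^sub>v x)
       = (\<Sum>d<CARD('m). vec n (\<lambda>p. x $ (p * CARD('m) + d))
                         \<bullet> (laplacian n E *\<^sub>v vec n (\<lambda>p. x $ (p * CARD('m) + d))))
       + (\<Sum>p<n. hma_of_vec (vec CARD('m) (\<lambda>c. x $ (p * CARD('m) + c)))
                 \<bullet> (H p *v hma_of_vec (vec CARD('m) (\<lambda>c. x $ (p * CARD('m) + c)))))"
proof -
  have L: "laplacian n E \<in> carrier_mat n n"
    by (simp add: laplacian_def)
  then have "(kron (laplacian n E) (1\<^sub>m CARD('m)) + block_diag n H) *\<^sub>v x
      = kron (laplacian n E) (1\<^sub>m CARD('m)) *\<^sub>v x + block_diag n H *\<^sub>v x"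
    using x kron_carrier_mat[of "laplacian n E" "1\<^sub>m CARD('m)"] block_diag_carrier_mat[of n H]
    by (intro add_mult_distrib_mat_vec) auto
  then have "x \<bullet> ((kron (laplacian n E) (1\<^sub>m CARD('m)) + block_diag n H) *\<^sub>v x)
      = x \<bullet> (kron (laplacian n E) (1\<^sub>m CARD('m)) *\<^sub>v x) + x \<bullet> (block_diag n H *\<^sub>v x)"
    using x L kron_carrier_mat[of "laplacian n E" "1\<^sub>m CARD('m)"] block_diag_carrier_mat[of n H]
    by (simp add: scalar_prod_add_distrib[of _ "n * CARD('m)"])
  then show ?thesis
    using x L by (simp add: kron_one_mat_quad_form block_diag_quad_form to_mat_quad_form)
qed

lemma laplacian_block_diag_quad_form_nonneg:
  fixes H :: "nat \<Rightarrow> real^'m::finite^'m" and x :: "real vec"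
  assumes g: "undirected_graph n E" and H: "\<And>p v. p < n \<Longrightarrow> 0 \<le> v \<bullet> (H p *v v)"
    and x: "x \<in> carrier_vec (n * CARD('m))"
  shows "0 \<le> x \<bullet> ((kron (laplacian n E) (1\<^sub>m CARD('m)) + block_diag n H) *\<^sub>v x)"
  unfolding laplacian_block_diag_quad_form[OF x]
  by (intro add_nonneg_nonneg sum_nonneg laplacian_quad_form_nonneg[OF g] H) auto

lemma laplacian_block_diag_quad_form_eq_0:
  fixes H :: "nat \<Rightarrow> real^'m::finite^'m" and x :: "real vec"
  assumes g: "undirected_graph n E" and conn: "graph_connected n E" and n: "0 < n"
    and H: "\<And>p v. p < n \<Longrightarrow> 0 \<le> v \<bullet> (H p *v v)" and pd: "pos_def_hma (\<Sum>p<n. H p)"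
    and x: "x \<in> carrier_vec (n * CARD('m))"
    and x0: "x \<bullet> ((kron (laplacian n E) (1\<^sub>m CARD('m)) + block_diag n H) *\<^sub>v x) = 0"
  shows "x = 0\<^sub>v (n * CARD('m))"
proof -
  let ?m = "CARD('m)"
  define slice where "slice d = vec n (\<lambda>p. x $ (p * ?m + d))" for d
  define block where "block p = vec ?m (\<lambda>c. x $ (p * ?m + c))" for p
  have slice_nonneg: "0 \<le> slice d \<bullet> (laplacian n E *\<^sub>v slice d)" for d
    by (simp add: slice_def laplacian_quad_form_nonneg[OF g])
  have "(\<Sum>d<?m. slice d \<bullet> (laplacian n E *\<^sub>v slice d))
      + (\<Sum>p<n. hma_of_vec (block p) \<bullet> (H p *v hma_of_vec (block p))) = 0"
    using x0 unfolding laplacian_block_diag_quad_form[OF x] slice_def block_def .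
  moreover have "0 \<le> (\<Sum>d<?m. slice d \<bullet> (laplacian n E *\<^sub>v slice d))"
    and "0 \<le> (\<Sum>p<n. hma_of_vec (block p) \<bullet> (H p *v hma_of_vec (block p)))"
    using slice_nonneg H by (auto intro!: sum_nonneg)
  ultimately have slices0: "(\<Sum>d<?m. slice d \<bullet> (laplacian n E *\<^sub>v slice d)) = 0"
    and blocks0: "(\<Sum>p<n. hma_of_vec (block p) \<bullet> (H p *v hma_of_vec (block p))) = 0"
    by linarith+
  have slice0: "slice d \<bullet> (laplacian n E *\<^sub>v slice d) = 0" if "d < ?m" for d
    using slices0 slice_nonneg that by (simp add: sum_nonneg_eq_0_iff)
  have block_eq: "block p = block 0" if "p < n" for p
  proof (rule eq_vecI)
    fix c assume "c < dim_vec (block 0)"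
    then have c: "c < ?m" by (simp add: block_def)
    have "slice c $ p = slice c $ 0"
      using laplacian_quad_form_eq_0_imp_const[OF g conn _ slice0[OF c] that n] by (simp add: slice_def)
    then show "block p $ c = block 0 $ c"
      using c that n by (simp add: slice_def block_def)
  qed (simp add: block_def)
  have "hma_of_vec (block 0) \<bullet> ((\<Sum>p<n. H p) *v hma_of_vec (block 0))
      = (\<Sum>p<n. hma_of_vec (block p) \<bullet> (H p *v hma_of_vec (block p)))"
    unfolding inner_sum_matrix_vector_mult by (intro sum.cong refl) (metis block_eq lessThan_iff)
  then have "hma_of_vec (block 0) \<bullet> ((\<Sum>p<n. H p) *v hma_of_vec (block 0)) = 0"
    using blocks0 by simp
  then have "(hma_of_vec (block 0) :: real^'m) = 0"
    using pd unfolding pos_def_hma_def by (metis less_irrefl)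
  then have block_0: "block 0 = 0\<^sub>v ?m"
    by (intro hma_of_vec_eq_0) (simp_all add: block_def)
  show ?thesis
  proof (rule vec_eq_0_if_blocks_eq_0[OF x])
    show "vec ?m (\<lambda>c. x $ (p * ?m + c)) = 0\<^sub>v ?m" if "p < n" for p
      using block_eq[OF that] block_0 by (simp add: block_def)
  qed
qed

section \<open>Hessians of convex functions\<close>

lemma convex_on_derivative_mono:
  fixes \<phi> :: "real \<Rightarrow> real"
  assumes cvx: "convex_on UNIV \<phi>" and a: "(\<phi> has_real_derivative \<phi>' a) (at a)"
    and b: "(\<phi> has_real_derivative \<phi>' b) (at b)" and ab: "a < b"
  shows "\<phi>' a \<le> \<phi>' b"
proof -
  have "\<phi>' b * (a - b) \<le> \<phi> a - \<phi> b" and "\<phi>' a * (b - a) \<le> \<phi> b - \<phi> a"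
    using convex_on_imp_above_tangent[OF cvx] a b by auto
  then have "\<phi>' a * (b - a) \<le> \<phi>' b * (b - a)"
    by (simp add: algebra_simps)
  with ab show ?thesis
    by simp
qed

lemma has_real_derivative_nonneg_if_right_ge:
  fixes \<psi> :: "real \<Rightarrow> real"
  assumes d: "(\<psi> has_real_derivative D) (at a)" and e: "0 < e"
    and ge: "\<And>s. a < s \<Longrightarrow> s < a + e \<Longrightarrow> \<psi> a \<le> \<psi> s"
  shows "0 \<le> D"
proof (rule ccontr)
  assume "\<not> 0 \<le> D"
  then obtain d where "0 < d" and less: "\<And>h. 0 < h \<Longrightarrow> h < d \<Longrightarrow> \<psi> (a + h) < \<psi> a"
    using DERIV_neg_dec_right[OF d] by force
  moreover have "0 < min d e / 2" "min d e / 2 < d" "min d e / 2 < e"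
    using \<open>0 < d\<close> e by auto
  ultimately show False
    using ge[of "a + min d e / 2"] less[of "min d e / 2"] by fastforce
qed

lemma convex_on_line:
  fixes f :: "'a::real_vector \<Rightarrow> real"
  assumes "convex_on UNIV f"
  shows "convex_on UNIV (\<lambda>s. f (x + s *\<^sub>R v))"
proof (rule convex_onI)
  fix t a b :: real
  have "x + ((1 - t) *\<^sub>R a + t *\<^sub>R b) *\<^sub>R v = (1 - t) *\<^sub>R (x + a *\<^sub>R v) + t *\<^sub>R (x + b *\<^sub>R v)"
    by (simp add: algebra_simps)
  moreover assume "0 < t" "t < 1"
  ultimately show "f (x + ((1 - t) *\<^sub>R a + t *\<^sub>R b) *\<^sub>R v) \<le> (1 - t) * f (x + a *\<^sub>R v) + t * f (x + b *\<^sub>R v)"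
    using convex_onD[OF assms, of t] by simp
qed simp

lemma convex_on_hessian_psd:
  fixes f :: "real^'m \<Rightarrow> real" and H :: "real^'m^'m"
  assumes cvx: "convex_on UNIV f" and hess: "has_hessian_at f H x"
  shows "0 \<le> v \<bullet> (H *v v)"
proof -
  obtain g where near: "\<forall>\<^sub>F y in nhds x. (f has_derivative (\<lambda>h. g y \<bullet> h)) (at y)"
    and gd: "(g has_derivative (\<lambda>h. H *v h)) (at x)"
    using hess unfolding has_hessian_at_def by blast
  from near obtain e where e: "e > 0"
    and grad: "\<And>y. dist y x < e \<Longrightarrow> (f has_derivative (\<lambda>h. g y \<bullet> h)) (at y)"
    unfolding eventually_nhds_metric by blast
  \<comment> \<open>\<open>\<psi>\<close> is the derivative of the convex restriction \<open>\<phi>\<close> of \<open>f\<close> to a line, hence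
    nondecreasing near \<open>0\<close>, and \<open>\<psi>'(0) = v\<^sup>T H v\<close>.\<close>
  define \<phi> where "\<phi> s = f (x + s *\<^sub>R v)" for s
  define \<psi> where "\<psi> s = g (x + s *\<^sub>R v) \<bullet> v" for s
  have line: "((\<lambda>s. x + s *\<^sub>R v) has_derivative (\<lambda>t. t *\<^sub>R v)) (at s)" for s
    by (auto intro!: derivative_eq_intros)
  have pos: "0 < norm v + 1"
    using norm_ge_zero[of v] by linarith
  have "convex_on UNIV \<phi>"
    unfolding \<phi>_def[abs_def] using cvx by (rule convex_on_line)
  moreover have d\<phi>: "(\<phi> has_real_derivative \<psi> s) (at s)" if "\<bar>s\<bar> * norm v < e" for s
  proof -
    have "dist (x + s *\<^sub>R v) x < e"
      using that by (simp add: dist_norm)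
    from has_derivative_compose[OF line grad[OF this]]
    have "(\<phi> has_derivative (\<lambda>t. t * \<psi> s)) (at s)"
      by (simp add: \<phi>_def[abs_def] \<psi>_def o_def)
    moreover have "(\<lambda>t. t * \<psi> s) = (*) (\<psi> s)"
      by (auto simp: mult.commute)
    ultimately show ?thesis
      by (simp add: has_field_derivative_def)
  qed
  ultimately have mono: "\<psi> 0 \<le> \<psi> s" if "0 < s" "s < e / (norm v + 1)" for s
  proof (rule convex_on_derivative_mono)
    have "s * norm v \<le> s * (norm v + 1)"
      using that by simp
    also have "\<dots> < e"
      using that pos by (simp add: pos_less_divide_eq)
    finally show "(\<phi> has_real_derivative \<psi> s) (at s)"
      using that by (intro d\<phi>) simp
  qed (use e that in \<open>auto intro: d\<phi>\<close>)
  have "((\<lambda>s. g (x + s *\<^sub>R v)) has_derivative (\<lambda>t. H *v (t *\<^sub>R v))) (at 0)"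
    using has_derivative_compose[OF line, of g "\<lambda>h. H *v h" 0] gd by (simp add: o_def)
  then have "(\<psi> has_real_derivative (H *v v) \<bullet> v) (at 0)"
    unfolding has_field_derivative_def \<psi>_def[abs_def]
    by (auto intro!: derivative_eq_intros simp: matrix_vector_mult_scaleR mult.commute)
  then have "0 \<le> (H *v v) \<bullet> v"
    by (rule has_real_derivative_nonneg_if_right_ge[where e = "e / (norm v + 1)"])
      (use e pos mono in auto)
  then show ?thesis
    by (simp add: inner_commute)
qed

section \<open>The coupling block \<open>V\<^sub>1 S \<otimes> I\<close>\<close>

lemma orthonormal_columns_of_orthogonal_extension:
  fixes V :: "'a::comm_ring_1 mat"
  assumes V: "V \<in> carrier_mat n k" and k: "k \<le> n"
    and orth: "transpose_mat (mat n n (\<lambda>(i, j). if j < k then V $$ (i, j) else g i j))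
             * mat n n (\<lambda>(i, j). if j < k then V $$ (i, j) else g i j) = 1\<^sub>m n"
  shows "transpose_mat V * V = 1\<^sub>m k"
proof (rule eq_matI)
  fix l j assume "l < dim_row (1\<^sub>m k :: 'a mat)" "j < dim_col (1\<^sub>m k :: 'a mat)"
  then have l: "l < k" and j: "j < k" by auto
  have "(transpose_mat V * V) $$ (l, j) = (\<Sum>p<n. V $$ (p, l) * V $$ (p, j))"
    using V l j by (simp add: scalar_prod_as_sum)
  also have "\<dots> = 1\<^sub>m n $$ (l, j)"
    using l j k by (simp flip: orth add: scalar_prod_as_sum)
  finally show "(transpose_mat V * V) $$ (l, j) = 1\<^sub>m k $$ (l, j)"
    using l j k by simp
qed (use V in auto)

lemma kron_diag_mult_transpose:
  fixes V :: "'a::comm_ring_1 mat"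
  assumes V: "V \<in> carrier_mat n k"
  shows "kron (mat k k (\<lambda>(i, j). if i = j then \<kappa> i else 0) * transpose_mat V) (1\<^sub>m m)
       = transpose_mat (kron (V * mat k k (\<lambda>(i, j). if i = j then \<kappa> i else 0)) (1\<^sub>m m))"
  using V by (simp add: transpose_kron transpose_mult[OF V mat_carrier] transpose_diag_mat)

lemma kron_orthonormal_mult_diag_trivial_kernel:
  fixes V :: "'a::idom mat"
  assumes V: "V \<in> carrier_mat n k" and orth: "transpose_mat V * V = 1\<^sub>m k"
    and \<kappa>: "\<And>i. i < k \<Longrightarrow> \<kappa> i \<noteq> 0"
    and y: "y \<in> carrier_vec (k * m)"
    and Ky: "kron (V * mat k k (\<lambda>(i, j). if i = j then \<kappa> i else 0)) (1\<^sub>m m) *\<^sub>v y = 0\<^sub>v (n * m)"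
  shows "y = 0\<^sub>v (k * m)"
proof (rule kron_one_mat_trivial_kernel[OF _ _ y Ky])
  let ?S = "mat k k (\<lambda>(i, j). if i = j then \<kappa> i else 0)"
  have S: "?S \<in> carrier_mat k k"
    by simp
  then show "V * ?S \<in> carrier_mat n k"
    using V by simp
  show "z = 0\<^sub>v k" if "z \<in> carrier_vec k" "(V * ?S) *\<^sub>v z = 0\<^sub>v n" for z
  proof (rule mult_mat_trivial_kernel[OF V S _ _ that])
    show "w = 0\<^sub>v k" if "w \<in> carrier_vec k" "V *\<^sub>v w = 0\<^sub>v n" for w
      using left_invertible_trivial_kernel[OF _ V orth that] V by simp
    show "w = 0\<^sub>v k" if "w \<in> carrier_vec k" "?S *\<^sub>v w = 0\<^sub>v k" for w
      using diag_mat_trivial_kernel[OF \<kappa> that] .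
  qed
qed

theorem lemma7:
  fixes n :: nat and E :: "nat \<Rightarrow> nat \<Rightarrow> bool"
    and f :: "nat \<Rightarrow> real^'m \<Rightarrow> real" and H :: "nat \<Rightarrow> real^'m^'m" and xs :: "real^'m"
    and V1 :: "real mat" and \<kappa> :: "nat \<Rightarrow> real"
  assumes n: "n \<ge> 1"
    and graph: "undirected_graph n E" and conn: "graph_connected n E"
    and cvx: "\<forall>i<n. convex_on UNIV (f i)"
    and hess: "\<forall>i<n. has_hessian_at (f i) (H i) xs"
    and pd: "pos_def_hma (\<Sum>i<n. H i)"
    and V1_dim: "V1 \<in> carrier_mat n (n - 1)"
    and kappa_pos: "\<forall>k < n - 1. \<kappa> k > 0"
    and V_orth: "transpose_mat (mat n n (\<lambda>(i,j). if j < n - 1 then V1 $$ (i,j) else 1 / sqrt (real n)))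
                 * mat n n (\<lambda>(i,j). if j < n - 1 then V1 $$ (i,j) else 1 / sqrt (real n)) = 1\<^sub>m n"
    and V_diag: "transpose_mat (mat n n (\<lambda>(i,j). if j < n - 1 then V1 $$ (i,j) else 1 / sqrt (real n)))
                 * laplacian n E
                 * mat n n (\<lambda>(i,j). if j < n - 1 then V1 $$ (i,j) else 1 / sqrt (real n))
                 = mat n n (\<lambda>(i,j). if i = j \<and> i < n - 1 then \<kappa> i else 0)"
  shows "hurwitz (- four_block_mat
            (kron (laplacian n E) (1\<^sub>m CARD('m)) + block_diag n H)
            (kron (V1 * mat (n - 1) (n - 1) (\<lambda>(i,j). if i = j then \<kappa> i else 0)) (1\<^sub>m CARD('m)))
            (- kron (mat (n - 1) (n - 1) (\<lambda>(i,j). if i = j then \<kappa> i else 0) * transpose_mat V1) (1\<^sub>m CARD('m)))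
            (0\<^sub>m ((n - 1) * CARD('m)) ((n - 1) * CARD('m))))"
proof -
  let ?m = "CARD('m)"
  let ?S = "mat (n - 1) (n - 1) (\<lambda>(i, j). if i = j then \<kappa> i else (0::real))"
  define A where "A = kron (laplacian n E) (1\<^sub>m ?m) + block_diag n H"
  define B where "B = kron (V1 * ?S) (1\<^sub>m ?m)"
  have A: "A \<in> carrier_mat (n * ?m) (n * ?m)"
    by (simp add: A_def kron_def laplacian_def block_diag_def)
  have B: "B \<in> carrier_mat (n * ?m) ((n - 1) * ?m)"
    using V1_dim by (simp add: B_def kron_def)
  have H_psd: "0 \<le> v \<bullet> (H p *v v)" if "p < n" for p v
    using that cvx hess by (intro convex_on_hessian_psd[of "f p" "H p" xs]) auto
  have V1_orth: "transpose_mat V1 * V1 = 1\<^sub>m (n - 1)"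
    by (rule orthonormal_columns_of_orthogonal_extension[OF V1_dim _ V_orth]) simp
  have "hurwitz (- four_block_mat A B (- transpose_mat B) (0\<^sub>m ((n - 1) * ?m) ((n - 1) * ?m)))"
  proof (rule hurwitz_neg_saddle_point_mat[OF A B])
    show "0 \<le> x \<bullet> (A *\<^sub>v x)" if "x \<in> carrier_vec (n * ?m)" for x
      unfolding A_def by (rule laplacian_block_diag_quad_form_nonneg[OF graph H_psd that])
    show "x = 0\<^sub>v (n * ?m)" if "x \<in> carrier_vec (n * ?m)" "x \<bullet> (A *\<^sub>v x) = 0" for x
      using n that unfolding A_def by (intro laplacian_block_diag_quad_form_eq_0[OF graph conn _ H_psd pd]) auto
    show "y = 0\<^sub>v ((n - 1) * ?m)" if "y \<in> carrier_vec ((n - 1) * ?m)" "B *\<^sub>v y = 0\<^sub>v (n * ?m)" for y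
      using kappa_pos that unfolding B_def
      by (intro kron_orthonormal_mult_diag_trivial_kernel[OF V1_dim V1_orth]) auto
  qed
  then show ?thesis
    unfolding A_def B_def kron_diag_mult_transpose[OF V1_dim] .
qed

end
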